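(* Consider an agent-dependent SDP PEP for distributed optimization in which all $n\ge2$ agents are equivalent, restricted to fully symmetric solutions $F^s=[(f^A)^T\dots(f^A)^T]$, $G^s$ with all diagonal blocks $G^A$ and all off-diagonal blocks $G^C$, and let $G^T=\frac1n(G^A+(n-1)G^C)$. Then every scale-invariant Gram-representable expression can be written, with coefficients independent of $n$, as a linear expression in $f^A$, $G^A$ and $G^T$. Specifically, for local variables $x_i=P_i\xi_x$, $y_i=P_i\xi_y$ and function values $f_i(x_i)=\xi_{f(x)}^Tf_i$: $\frac1n\sum_{i=1}^nf_i(x_i)=\xi_{f(x)}^Tf^A$, $\frac1n\sum_{i=1}^nx_i^Ty_i=\xi_x^TG^A\xi_y$, and $\frac1{n^2}\sum_{i=1}^n\sum_{j=1}^nx_i^Ty_j=\xi_x^TG^T\xi_y$.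
   Context: In the agent-dependent SDP PEP, each agent $i$ holds $p$ vector variables as the columns of $P_i\in\mathbb{R}^{d\times p}$ (same order for all agents; points common to all agents such as $x^*$ are copied into every $P_i$), and $q$ function values in $f_i\in\mathbb{R}^q$; the variables are $F=[f_1^T\dots f_n^T]$ and $G=P^TP\succeq0$, $P=[P_1\dots P_n]$, $G_{ij}=P_i^TP_j$. A coefficient vector $\xi_x\in\mathbb{R}^p$ satisfies $P_i\xi_x=x_i$ for all $i$, and $\xi_{f(x)}\in\mathbb{R}^q$ satisfies $\xi_{f(x)}^Tf_i=f_i(x_i)$ for all $i$. All agents being equivalent means swapping the blocks of any two agents in any feasible solution gives a feasible solution with equal objective; in that case the PEP may be restricted to fully symmetric solutions. A Gram-representable expression $h$ (linear in $(F,G)$) is scale-invariant if $h=\sum_jc_jh_j$ with coefficients $c_j$ independent of $n$ and each $h_j$ of one of the forms $\frac1n\sum_if_i(x_i)$, $\frac1n\sum_ix_i^Ty_i$, $\frac1{n^2}\sum_i\sum_jx_i^Ty_j$ (including $x=y$). *)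

theory Defs
  imports "HOL-Analysis.Analysis"
begin

definition GT_block :: "nat \<Rightarrow> real^'p^'p \<Rightarrow> real^'p^'p \<Rightarrow> real^'p^'p" where
  "GT_block n GA GC = (1 / real n) *\<^sub>R (GA + (real n - 1) *\<^sub>R GC)"

end

theory Submission
  imports Defs
begin

(*
  Every local quantity is a bilinear form in the coefficient vectors whose matrix is a block of
  the Gram matrix: x_i . y_j = xi_x . (P_i^T P_j xi_y).  Under full symmetry the average of the
  n diagonal blocks is G^A, and the average of all n^2 blocks, of which n (n - 1) are
  off-diagonal, is (G^A + (n - 1) G^C) / n = G^T.
*)

lemma dot_matrix_vector_mul_eq_transpose_mul:
  fixes A B :: "real^'p^'d"
  shows "(A *v x) \<bullet> (B *v y) = x \<bullet> ((transpose A ** B) *v y)"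
proof -
  have "(A *v x) \<bullet> (B *v y) = (x v* transpose A) \<bullet> (B *v y)"
    by (simp only: vector_transpose_matrix)
  also have "\<dots> = x \<bullet> (transpose A *v (B *v y))"
    by (rule dot_lmul_matrix)
  also have "\<dots> = x \<bullet> ((transpose A ** B) *v y)"
    by (simp only: matrix_vector_mul_assoc)
  finally show ?thesis .
qed

lemma sum_sum_diagonal_off_diagonal:
  fixes g :: "'i \<Rightarrow> 'i \<Rightarrow> 'a::comm_ring_1"
  assumes "finite I"
    and diag: "\<And>i. i \<in> I \<Longrightarrow> g i i = a"
    and off_diag: "\<And>i j. i \<in> I \<Longrightarrow> j \<in> I \<Longrightarrow> i \<noteq> j \<Longrightarrow> g i j = c"
  shows "(\<Sum>i\<in>I. \<Sum>j\<in>I. g i j) = of_nat (card I) * (a + (of_nat (card I) - 1) * c)"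
proof -
  have "(\<Sum>j\<in>I. g i j) = a + (of_nat (card I) - 1) * c" if "i \<in> I" for i
  proof -
    have "(\<Sum>j\<in>I. g i j) = g i i + (\<Sum>j\<in>I - {i}. g i j)"
      using \<open>finite I\<close> \<open>i \<in> I\<close> by (rule sum.remove)
    also have "(\<Sum>j\<in>I - {i}. g i j) = (\<Sum>j\<in>I - {i}. c)"
      using \<open>i \<in> I\<close> off_diag by (intro sum.cong) auto
    also have "\<dots> = (of_nat (card I) - 1) * c"
    proof -
      have "card I \<ge> 1"
        using \<open>finite I\<close> \<open>i \<in> I\<close> by (auto simp: Suc_le_eq card_gt_0_iff)
      then show ?thesis
        using \<open>finite I\<close> \<open>i \<in> I\<close> by (simp add: card_Diff_singleton of_nat_diff)
    qed
    finally show ?thesis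
      using diag \<open>i \<in> I\<close> by simp
  qed
  then show ?thesis
    by simp
qed

lemma dot_GT_block_mult:
  "x \<bullet> (GT_block n GA GC *v y)
    = (x \<bullet> (GA *v y) + (real n - 1) * (x \<bullet> (GC *v y))) / real n"
  unfolding GT_block_def
  by (simp only: scaleR_matrix_vector_assoc[symmetric] matrix_vector_mult_add_rdistrib
      inner_add_right inner_scaleR_right) simp

theorem lemma4:
  fixes n :: nat
    and P :: "nat \<Rightarrow> real^'p^'d"
    and f :: "nat \<Rightarrow> real^'q"
    and fA :: "real^'q"
    and GA GC :: "real^'p^'p"
    and \<xi>x \<xi>y :: "real^'p"
    and \<xi>f :: "real^'q"
  assumes n2: "n \<ge> 2"
    and symF: "\<forall>i<n. f i = fA"
    and diagG: "\<forall>i<n. transpose (P i) ** P i = GA"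
    and offG: "\<forall>i<n. \<forall>j<n. i \<noteq> j \<longrightarrow> transpose (P i) ** P j = GC"
  shows "(1 / real n) * (\<Sum>i<n. \<xi>f \<bullet> f i) = \<xi>f \<bullet> fA
    \<and> (1 / real n) * (\<Sum>i<n. (P i *v \<xi>x) \<bullet> (P i *v \<xi>y)) = \<xi>x \<bullet> (GA *v \<xi>y)
    \<and> (1 / (real n)\<^sup>2) * (\<Sum>i<n. \<Sum>j<n. (P i *v \<xi>x) \<bullet> (P j *v \<xi>y))
           = \<xi>x \<bullet> (GT_block n GA GC *v \<xi>y)"
proof -
  have "real n > 0"
    using n2 by simp
  have averaged_values: "(\<Sum>i<n. \<xi>f \<bullet> f i) = real n * (\<xi>f \<bullet> fA)"
    using symF by simp
  have diagonal: "(\<Sum>i<n. (P i *v \<xi>x) \<bullet> (P i *v \<xi>y)) = real n * (\<xi>x \<bullet> (GA *v \<xi>y))"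
    using diagG by (simp add: dot_matrix_vector_mul_eq_transpose_mul)
  have all_pairs: "(\<Sum>i<n. \<Sum>j<n. (P i *v \<xi>x) \<bullet> (P j *v \<xi>y))
      = real n * (\<xi>x \<bullet> (GA *v \<xi>y) + (real n - 1) * (\<xi>x \<bullet> (GC *v \<xi>y)))"
    using diagG offG
    by (subst sum_sum_diagonal_off_diagonal) (auto simp: dot_matrix_vector_mul_eq_transpose_mul)
  show ?thesis
    using \<open>real n > 0\<close>
    unfolding averaged_values diagonal all_pairs dot_GT_block_mult
    by (simp add: power2_eq_square field_simps)
qed

end
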